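(* There is a function $f(\Delta)=O(\Delta^{4/3})$ (as $\Delta\to\infty$) such that every graph $G$ with maximum degree $\Delta\ge 3$ satisfies $\pi'_l(G)\le \Delta^2 + 2^{4/3}\Delta^{5/3} + f(\Delta)$.
   Context: An edge-coloring is non-repetitive if for every path with an even number $2j$ of edges $e_1,\dots,e_{2j}$ (in order along the path), the color sequence $(c(e_1),\dots,c(e_j))$ differs from $(c(e_{j+1}),\dots,c(e_{2j}))$. $\pi'_l(G)$, the Thue choice index, is the minimum $k$ such that for every assignment of lists of size at least $k$ to the edges, $G$ has a non-repetitive edge-coloring in which every edge receives a color from its list. *)

theory Defs
  imports Complex_Main "HOL-Library.Landau_Symbols"
begin

definition simple_graph :: "'a set \<Rightarrow> 'a set set \<Rightarrow> bool" where
  "simple_graph V E \<longleftrightarrow> finite V \<and> (\<forall>e\<in>E. e \<subseteq> V \<and> card e = 2)"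

definition degree :: "'a set set \<Rightarrow> 'a \<Rightarrow> nat" where
  "degree E v = card {e \<in> E. v \<in> e}"

definition max_degree :: "'a set \<Rightarrow> 'a set set \<Rightarrow> nat" where
  "max_degree V E = Max (insert 0 (degree E ` V))"

definition is_path :: "'a set set \<Rightarrow> 'a list \<Rightarrow> bool" where
  "is_path E vs \<longleftrightarrow> vs \<noteq> [] \<and> distinct vs \<and>
     (\<forall>i. Suc i < length vs \<longrightarrow> {vs ! i, vs ! Suc i} \<in> E)"

definition path_edges :: "'a list \<Rightarrow> 'a set list" where
  "path_edges vs = map (\<lambda>i. {vs ! i, vs ! Suc i}) [0..<length vs - 1]"

definition nonrepetitive :: "'a set set \<Rightarrow> ('a set \<Rightarrow> 'c) \<Rightarrow> bool" where
  "nonrepetitive E c \<longleftrightarrow>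
     (\<forall>vs j. is_path E vs \<longrightarrow> j \<ge> 1 \<longrightarrow> length (path_edges vs) = 2 * j \<longrightarrow>
        map c (take j (path_edges vs)) \<noteq> map c (drop j (path_edges vs)))"

definition thue_choosable :: "'a set set \<Rightarrow> nat \<Rightarrow> bool" where
  "thue_choosable E k \<longleftrightarrow>
     (\<forall>L :: 'a set \<Rightarrow> nat set. (\<forall>e\<in>E. infinite (L e) \<or> k \<le> card (L e)) \<longrightarrow>
        (\<exists>c. (\<forall>e\<in>E. c e \<in> L e) \<and> nonrepetitive E c))"

definition thue_choice_index :: "'a set set \<Rightarrow> nat" where
  "thue_choice_index E = (LEAST k. thue_choosable E k)"

end

theory Submission
  imports Defs "HOL-Library.FuncSet"
begin

(*
  A counting argument in the style of Rosenfeld. Let N(F) be the number of non-repetitive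
  colourings of an edge set F from lists of size k, and let D^2 < beta. One shows
  N(F + e) >= beta N(F) by induction on F. Of the at least k N(F) ways to colour e on top of a
  colouring of F, a bad one is repetitive on some path with 2j edges through e. Up to reversal
  there are at most 2j D^(2j-1) such paths, and a colouring that is repetitive on one of them is
  determined by its restriction to F minus the j - 1 other edges in the half containing e, so by
  induction there are at most N(F) / beta^(j-1) of them. Summing the series gives
  N(F + e) >= (k - 2D / (1 - D^2/beta)^2) N(F) >= beta N(F) once k is large enough, and then
  N(E) >= beta^|E| > 0. With t = D^(1/3) and beta = t^6 + 3/2 t^5 the required k is
  t^6 + 43/18 t^5 + 8/3 t^4 + 2 t^3, and 43/18 < 2^(4/3).
*)

lemma length_path_edges [simp]: "length (path_edges vs) = length vs - 1"
  by (simp add: path_edges_def)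

lemma nth_path_edges: "i < length vs - 1 \<Longrightarrow> path_edges vs ! i = {vs ! i, vs ! Suc i}"
  by (simp add: path_edges_def)

lemma is_path_iff_edges: "is_path E vs \<longleftrightarrow> vs \<noteq> [] \<and> distinct vs \<and> set (path_edges vs) \<subseteq> E"
proof -
  have "(\<forall>i. Suc i < length vs \<longrightarrow> {vs ! i, vs ! Suc i} \<in> E) \<longleftrightarrow> set (path_edges vs) \<subseteq> E"
    by (auto simp: set_conv_nth nth_path_edges less_diff_conv)
  thus ?thesis by (simp only: is_path_def)
qed

lemma path_edges_rev: "path_edges (rev vs) = rev (path_edges vs)"
proof (rule nth_equalityI)
  fix i assume "i < length (path_edges (rev vs))"
  hence i: "Suc i < length vs" by simp
  have "path_edges (rev vs) ! i = {vs ! (length vs - Suc i), vs ! (length vs - Suc (Suc i))}"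
    using i by (simp add: nth_path_edges rev_nth)
  also have "\<dots> = path_edges vs ! (length vs - Suc (Suc i))"
    using i by (subst nth_path_edges) (auto simp: Suc_diff_Suc)
  also have "\<dots> = rev (path_edges vs) ! i" using i by (simp add: rev_nth)
  finally show "path_edges (rev vs) ! i = rev (path_edges vs) ! i" .
qed simp

lemma path_edges_take: "path_edges (take (Suc i) vs) = take i (path_edges vs)"
proof (rule nth_equalityI)
  fix a assume "a < length (path_edges (take (Suc i) vs))"
  hence "a < i" "Suc a < length vs" by auto
  thus "path_edges (take (Suc i) vs) ! a = take i (path_edges vs) ! a"
    by (simp add: nth_path_edges)
qed (simp add: min_def; linarith)

lemma path_edges_drop: "path_edges (drop i vs) = drop i (path_edges vs)"
  by (rule nth_equalityI) (auto simp: nth_path_edges)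

lemma path_edges_Cons: "path_edges (x # y # ys) = {x, y} # path_edges (y # ys)"
  by (rule nth_equalityI) (auto simp: nth_path_edges nth_Cons split: nat.splits)

lemma distinct_path_edges: "distinct vs \<Longrightarrow> distinct (path_edges vs)"
  by (auto simp: distinct_conv_nth nth_path_edges doubleton_eq_iff nth_eq_iff_index_eq)

lemma is_path_rev: "is_path E (rev vs) \<longleftrightarrow> is_path E vs"
  by (simp add: is_path_iff_edges path_edges_rev)

lemma is_path_mono: "is_path F vs \<Longrightarrow> F \<subseteq> G \<Longrightarrow> is_path G vs"
  by (auto simp: is_path_iff_edges)

lemma nonrepetitive_antimono: "nonrepetitive G c \<Longrightarrow> F \<subseteq> G \<Longrightarrow> nonrepetitive F c"
  unfolding nonrepetitive_def using is_path_mono by blast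

lemma nonrepetitive_cong:
  assumes "\<And>x. x \<in> F \<Longrightarrow> c x = d x" and "nonrepetitive F c"
  shows "nonrepetitive F d"
  unfolding nonrepetitive_def
proof (intro allI impI)
  fix vs j assume p: "is_path F vs" "1 \<le> j" "length (path_edges vs) = 2 * j"
  have "set (path_edges vs) \<subseteq> F" using p by (simp add: is_path_iff_edges)
  hence "map c (path_edges vs) = map d (path_edges vs)" using assms(1) by (auto intro: map_cong)
  hence "map c (take j (path_edges vs)) = map d (take j (path_edges vs))"
    and "map c (drop j (path_edges vs)) = map d (drop j (path_edges vs))"
    by (metis take_map, metis drop_map)
  thus "map d (take j (path_edges vs)) \<noteq> map d (drop j (path_edges vs))"
    using assms(2) p unfolding nonrepetitive_def by metis
qed

lemma nonrepetitive_empty: "nonrepetitive {} c"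
  by (auto simp: nonrepetitive_def is_path_iff_edges)

lemma repetition_rev:
  assumes "length xs = 2 * j" "map c (take j xs) = map c (drop j xs)"
  shows "map c (take j (rev xs)) = map c (drop j (rev xs))"
  using assms by (simp add: take_rev drop_rev rev_map[symmetric])

lemma repetition_nth:
  assumes "length xs = 2 * j" "map c (take j xs) = map c (drop j xs)" "t < j"
  shows "c (xs ! t) = c (xs ! (j + t))"
  using arg_cong[OF assms(2), of "\<lambda>ys. ys ! t"] assms(1,3) by simp

lemma nth_second_half_notin_first_half:
  assumes "distinct xs" "length xs = 2 * j" "t < j"
  shows "xs ! (j + t) \<notin> set (take j xs)"
  using assms by (auto simp: in_set_conv_nth nth_eq_iff_index_eq)

definition neighbours :: "'a set set \<Rightarrow> 'a \<Rightarrow> 'a set" where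
  "neighbours G x = {y. {x, y} \<in> G}"

definition walks :: "'a set set \<Rightarrow> 'a \<Rightarrow> nat \<Rightarrow> 'a list set" where
  "walks G w m = {ws. length ws = Suc m \<and> hd ws = w \<and> set (path_edges ws) \<subseteq> G}"

lemma walks_0: "walks G w 0 = {[w]}"
  by (auto simp: walks_def path_edges_def length_Suc_conv)

lemma walks_Suc_subset:
  "walks G w (Suc m) \<subseteq> (\<lambda>(x, ws). w # ws) ` (SIGMA x:neighbours G w. walks G x m)"
proof
  fix ws assume ws: "ws \<in> walks G w (Suc m)"
  then obtain b rest where ws_eq: "ws = w # b # rest" "length rest = m"
    by (auto simp: walks_def length_Suc_conv)
  hence "b \<in> neighbours G w" "b # rest \<in> walks G b m"
    using ws by (simp_all add: walks_def neighbours_def path_edges_Cons)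
  thus "ws \<in> (\<lambda>(x, ws). w # ws) ` (SIGMA x:neighbours G w. walks G x m)"
    using ws_eq by (intro image_eqI[where x = "(b, b # rest)"]) auto
qed

lemma finite_card_walks:
  assumes "\<And>x. finite (neighbours G x)" "\<And>x. card (neighbours G x) \<le> D"
  shows "finite (walks G w m) \<and> card (walks G w m) \<le> D ^ m"
proof (induction m arbitrary: w)
  case 0
  show ?case by (simp add: walks_0)
next
  case (Suc m)
  let ?S = "SIGMA x:neighbours G w. walks G x m"
  have fin: "finite ?S" using assms(1) Suc.IH by blast
  have "card ?S = (\<Sum>x\<in>neighbours G w. card (walks G x m))"
    using assms(1) Suc.IH by (intro card_SigmaI) auto
  also have "\<dots> \<le> card (neighbours G w) * D ^ m"
    using Suc.IH sum_bounded_above[of "neighbours G w" "\<lambda>x. card (walks G x m)" "D ^ m"] by auto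
  also have "\<dots> \<le> D ^ Suc m" using assms(2) by simp
  finally have "card ?S \<le> D ^ Suc m" .
  moreover have "card (walks G w (Suc m)) \<le> card ?S"
    using card_mono[OF finite_imageI[OF fin] walks_Suc_subset] card_image_le[OF fin, of "\<lambda>(x, ws). w # ws"]
    by linarith
  moreover have "finite (walks G w (Suc m))"
    using finite_subset[OF walks_Suc_subset finite_imageI[OF fin]] .
  ultimately show ?case by linarith
qed

definition paths_through :: "'a set set \<Rightarrow> 'a \<Rightarrow> 'a \<Rightarrow> nat \<Rightarrow> 'a list set" where
  "paths_through G u v n =
     {vs. is_path G vs \<and> length vs = n \<and> (\<exists>i. Suc i < n \<and> vs ! i = u \<and> vs ! Suc i = v)}"

lemma finite_card_paths_through_at:
  fixes G :: "'a set set" and u v :: 'a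
  assumes "\<And>x. finite (neighbours G x)" "\<And>x. card (neighbours G x) \<le> D" and i: "Suc i < n"
  defines "A \<equiv> {vs. is_path G vs \<and> length vs = n \<and> vs ! i = u \<and> vs ! Suc i = v}"
  shows "finite A \<and> card A \<le> D ^ (n - 2)"
proof -
  define h where "h vs = (rev (take (Suc i) vs), drop (Suc i) vs)" for vs :: "'a list"
  define B where "B = walks G u i \<times> walks G v (n - Suc (Suc i))"
  \<comment> \<open>split the path just before the edge uv and read both halves as walks leaving it\<close>
  have inj: "inj_on h A"
    by (rule inj_onI) (metis h_def prod.inject append_take_drop_id rev_rev_ident)
  have "h vs \<in> B" if "vs \<in> A" for vs
  proof -
    have l: "length vs = n" and pe: "set (path_edges vs) \<subseteq> G"
      and "vs ! i = u" "vs ! Suc i = v"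
      using that by (auto simp: A_def is_path_iff_edges)
    moreover have "hd (rev (take (Suc i) vs)) = vs ! i"
      using l i by (simp add: hd_rev take_Suc_conv_app_nth)
    moreover have "set (path_edges (rev (take (Suc i) vs))) \<subseteq> G"
      using pe by (auto simp: path_edges_rev path_edges_take dest: in_set_takeD)
    moreover have "set (path_edges (drop (Suc i) vs)) \<subseteq> G"
      using pe by (auto simp: path_edges_drop dest: in_set_dropD)
    ultimately show ?thesis using i by (simp add: B_def walks_def h_def hd_drop_conv_nth)
  qed
  hence img: "h ` A \<subseteq> B" by blast
  have "finite B" and "card B \<le> D ^ i * D ^ (n - Suc (Suc i))"
    using finite_card_walks[OF assms(1,2), of u i] finite_card_walks[OF assms(1,2), of v "n - Suc (Suc i)"]
    by (auto simp: B_def card_cartesian_product intro: mult_le_mono)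
  moreover have "D ^ i * D ^ (n - Suc (Suc i)) = D ^ (n - 2)"
    using i by (simp add: power_add[symmetric])
  ultimately show ?thesis
    using inj img card_inj_on_le[OF inj img] by (metis finite_imageD finite_subset le_trans)
qed

lemma finite_card_paths_through:
  assumes "\<And>x. finite (neighbours G x)" "\<And>x. card (neighbours G x) \<le> D"
  shows "finite (paths_through G u v n) \<and> card (paths_through G u v n) \<le> (n - 1) * D ^ (n - 2)"
proof -
  let ?A = "\<lambda>i. {vs. is_path G vs \<and> length vs = n \<and> vs ! i = u \<and> vs ! Suc i = v}"
  have eq: "paths_through G u v n = (\<Union>i<n - 1. ?A i)"
    by (auto simp: paths_through_def less_diff_conv)
  have A: "finite (?A i) \<and> card (?A i) \<le> D ^ (n - 2)" if "i < n - 1" for i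
    using finite_card_paths_through_at[OF assms] that by (simp add: less_diff_conv)
  have "card (\<Union>i<n - 1. ?A i) \<le> (\<Sum>i<n - 1. card (?A i))" by (rule card_UN_le) simp
  also have "\<dots> \<le> (n - 1) * D ^ (n - 2)"
    using A sum_bounded_above[of "{..<n - 1}" "\<lambda>i. card (?A i)"] by simp
  finally show ?thesis using A by (simp add: eq)
qed

lemma paths_through_rev:
  assumes "vs \<in> paths_through G v u n"
  shows "rev vs \<in> paths_through G u v n"
proof -
  obtain i where i: "Suc i < n" "vs ! i = v" "vs ! Suc i = u" and l: "length vs = n"
    and p: "is_path G vs"
    using assms by (auto simp: paths_through_def)
  define i' where "i' = n - Suc (Suc i)"
  have "Suc i' < n" "rev vs ! i' = u" "rev vs ! Suc i' = v"
    using i l by (auto simp: i'_def rev_nth Suc_diff_Suc)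
  thus ?thesis using p l by (auto simp: paths_through_def is_path_rev)
qed

lemma sum_index_power_le:
  fixes y :: real
  assumes "0 \<le> y" "y < 1"
  shows "(\<Sum>j = 1..K. real j * y ^ (j - 1)) \<le> 1 / (1 - y) ^ 2"
proof -
  have closed_form: "(\<Sum>j = 1..K. real j * y ^ (j - 1)) * (1 - y) ^ 2
      = 1 - (real K + 1) * y ^ K + real K * y ^ (K + 1)" for K
    by (induction K) (simp_all add: power2_eq_square algebra_simps)
  have "real K * y ^ (K + 1) \<le> (real K + 1) * y ^ K"
    using assms mult_left_le[of y "real K"] by (simp add: mult_right_mono mult.assoc[symmetric])
  hence "(\<Sum>j = 1..K. real j * y ^ (j - 1)) * (1 - y) ^ 2 \<le> 1"
    using closed_form[of K] by linarith
  thus ?thesis using assms by (simp add: field_simps)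
qed

lemma sum_path_weights_le:
  fixes N \<beta> :: real and D :: nat
  assumes \<beta>: "real D ^ 2 < \<beta>" and N: "0 \<le> N"
  shows "(\<Sum>j = 1..K. real (2 * j * D ^ (2 * j - 1)) * (N / \<beta> ^ (j - 1)))
    \<le> N * (2 * D / (1 - D ^ 2 / \<beta>) ^ 2)"
proof -
  define y where "y = real D ^ 2 / \<beta>"
  have "0 < \<beta>" using \<beta> by (metis zero_le_power2 le_less_trans)
  hence y: "0 \<le> y" "y < 1" using \<beta> by (simp_all add: y_def)
  have "real (2 * j * D ^ (2 * j - 1)) * (N / \<beta> ^ (j - 1)) = 2 * real D * N * (real j * y ^ (j - 1))"
    if "1 \<le> j" for j
  proof -
    have "2 * j - 1 = Suc (2 * (j - 1))" using that by simp
    thus ?thesis by (simp add: y_def power_mult power_divide)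
  qed
  hence "(\<Sum>j = 1..K. real (2 * j * D ^ (2 * j - 1)) * (N / \<beta> ^ (j - 1)))
      = 2 * real D * N * (\<Sum>j = 1..K. real j * y ^ (j - 1))"
    by (simp add: sum_distrib_left)
  also have "\<dots> \<le> 2 * real D * N * (1 / (1 - y) ^ 2)"
    using sum_index_power_le[OF y] N by (intro mult_left_mono) auto
  finally show ?thesis by (simp add: y_def mult_ac)
qed

locale nonrep_counting =
  fixes V :: "'a set" and E :: "'a set set" and L :: "'a set \<Rightarrow> nat set"
    and D :: nat and k :: nat and \<beta> :: real
  assumes simple: "simple_graph V E"
    and degree_le: "\<And>v. v \<in> V \<Longrightarrow> degree E v \<le> D"
    and finite_list: "\<And>e. e \<in> E \<Longrightarrow> finite (L e)"
    and card_list: "\<And>e. e \<in> E \<Longrightarrow> k \<le> card (L e)"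
    and beta_gt: "real D ^ 2 < \<beta>"
    and k_ge: "\<beta> + 2 * real D / (1 - real D ^ 2 / \<beta>) ^ 2 \<le> real k"
begin

lemma finite_E: "finite E"
proof -
  have "E \<subseteq> Pow V" using simple by (auto simp: simple_graph_def)
  thus ?thesis using simple by (auto simp: simple_graph_def intro: finite_subset)
qed

lemma beta_pos: "0 < \<beta>"
  using beta_gt by (metis zero_le_power2 le_less_trans)

lemma
  assumes "G \<subseteq> E"
  shows finite_neighbours: "finite (neighbours G x)"
    and card_neighbours_le: "card (neighbours G x) \<le> D"
proof -
  have sub: "neighbours G x \<subseteq> V" and x: "neighbours G x \<noteq> {} \<Longrightarrow> x \<in> V"
    using assms simple unfolding neighbours_def simple_graph_def by blast+
  have "inj_on (\<lambda>y. {x, y}) (neighbours G x)"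
    by (rule inj_onI) (auto simp: doubleton_eq_iff)
  moreover have "(\<lambda>y. {x, y}) ` neighbours G x \<subseteq> {e \<in> E. x \<in> e}"
    using assms by (auto simp: neighbours_def)
  ultimately have "card (neighbours G x) \<le> degree E x"
    unfolding degree_def using finite_E by (intro card_inj_on_le) auto
  thus "card (neighbours G x) \<le> D"
    using degree_le x by (cases "neighbours G x = {}") fastforce+
  show "finite (neighbours G x)"
    using sub simple by (auto simp: simple_graph_def intro: finite_subset)
qed

definition colourings :: "'a set set \<Rightarrow> ('a set \<Rightarrow> nat) set" where
  "colourings F = {c \<in> PiE F L. nonrepetitive F c}"

definition extensions :: "'a set set \<Rightarrow> 'a set \<Rightarrow> ('a set \<Rightarrow> nat) set" where
  "extensions F e = {c \<in> PiE (insert e F) L. nonrepetitive F c}"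

definition repetitive :: "'a set set \<Rightarrow> 'a set \<Rightarrow> nat \<Rightarrow> 'a list \<Rightarrow> ('a set \<Rightarrow> nat) set" where
  "repetitive F e j vs =
     {c \<in> extensions F e. map c (take j (path_edges vs)) = map c (drop j (path_edges vs))}"

definition grows :: "'a set set \<Rightarrow> bool" where
  "grows F \<longleftrightarrow> (\<forall>e \<in> E - F. \<beta> * card (colourings F) \<le> card (colourings (insert e F)))"

lemma finite_PiE_lists: "F \<subseteq> E \<Longrightarrow> finite (PiE F L)"
  using finite_E finite_list by (intro finite_PiE) (auto intro: finite_subset)

lemma finite_colourings: "F \<subseteq> E \<Longrightarrow> finite (colourings F)"
  using finite_PiE_lists by (simp add: colourings_def)

lemma finite_extensions: "F \<subseteq> E \<Longrightarrow> e \<in> E \<Longrightarrow> finite (extensions F e)"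
  using finite_PiE_lists[of "insert e F"] by (simp add: extensions_def)

lemma card_extensions_ge:
  assumes F: "F \<subseteq> E" and e: "e \<in> E" "e \<notin> F"
  shows "k * card (colourings F) \<le> card (extensions F e)"
proof -
  define m where "m = (\<lambda>(y :: nat, c :: 'a set \<Rightarrow> nat). c(e := y))"
  have "inj_on m (L e \<times> colourings F)"
  proof (rule inj_onI, clarify)
    fix y c y' c' assume c: "c \<in> colourings F" "c' \<in> colourings F" and eq: "m (y, c) = m (y', c')"
    have "c x = c' x" for x
    proof (cases "x = e")
      case True
      have "c \<in> PiE F L" "c' \<in> PiE F L" using c by (simp_all add: colourings_def)
      thus ?thesis using True e(2) by (simp add: PiE_arb[of c] PiE_arb[of c'])
    next
      case False
      thus ?thesis using fun_cong[OF eq, of x] by (simp add: m_def)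
    qed
    hence "c = c'" ..
    thus "y = y' \<and> c = c'" using fun_cong[OF eq, of e] by (simp add: m_def)
  qed
  moreover have "m ` (L e \<times> colourings F) \<subseteq> extensions F e"
  proof clarify
    fix y c assume "y \<in> L e" "c \<in> colourings F"
    moreover have "nonrepetitive F (c(e := y))"
      by (rule nonrepetitive_cong[of F c]) (use \<open>c \<in> colourings F\<close> e(2) in \<open>auto simp: colourings_def\<close>)
    ultimately show "m (y, c) \<in> extensions F e"
      by (simp add: m_def extensions_def colourings_def PiE_fun_upd)
  qed
  ultimately have "card (L e \<times> colourings F) \<le> card (extensions F e)"
    using finite_extensions[OF F e(1)] by (intro card_inj_on_le)
  moreover have "k * card (colourings F) \<le> card (L e) * card (colourings F)"
    using card_list[OF e(1)] by simp
  ultimately show ?thesis by (metis card_cartesian_product order.trans)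
qed

lemma card_colourings_diff_le:
  assumes F: "F \<subseteq> E" and IH: "\<And>F'. F' \<subset> F \<Longrightarrow> grows F'" and S: "S \<subseteq> F"
  shows "real (card (colourings (F - S))) * \<beta> ^ card S \<le> card (colourings F)"
proof -
  have "finite S" using S F finite_E by (auto intro: finite_subset)
  thus ?thesis using S
  proof (induction S rule: finite_induct)
    case (insert s S)
    have "F - insert s S \<subset> F" "s \<in> E - (F - insert s S)" using insert.prems F by auto
    hence "\<beta> * card (colourings (F - insert s S)) \<le> card (colourings (insert s (F - insert s S)))"
      using IH unfolding grows_def by blast
    also have "insert s (F - insert s S) = F - S" using insert by auto
    finally have "\<beta> * card (colourings (F - insert s S)) \<le> card (colourings (F - S))" .
    hence "real (card (colourings (F - insert s S))) * \<beta> ^ card (insert s S)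
        \<le> real (card (colourings (F - S))) * \<beta> ^ card S"
      using insert.hyps beta_pos by (simp add: mult_right_mono mult.assoc[symmetric] mult.commute)
    thus ?case using insert by simp
  qed simp
qed

lemma restrict_inj_on_repetitive:
  assumes e: "e \<notin> F" and p: "is_path (insert e F) vs" and l: "length (path_edges vs) = 2 * j"
    and et: "e \<in> set (take j (path_edges vs))"
  shows "inj_on (\<lambda>c. restrict c (F - (set (take j (path_edges vs)) - {e}))) (repetitive F e j vs)"
proof (rule inj_onI)
  define pe where "pe = path_edges vs"
  define H where "H = set (take j pe)"
  have dist: "distinct pe" and spe: "set pe \<subseteq> insert e F"
    using p distinct_path_edges by (auto simp: is_path_iff_edges pe_def)
  have l': "length pe = 2 * j" using l by (simp add: pe_def)
  fix c d assume c: "c \<in> repetitive F e j vs" and d: "d \<in> repetitive F e j vs"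
    and eq: "restrict c (F - (set (take j (path_edges vs)) - {e})) = restrict d (F - (set (take j (path_edges vs)) - {e}))"
  have off: "c x = d x" if "x \<in> insert e F - H" for x
    using fun_cong[OF eq, of x] that e et by (auto simp: H_def pe_def split: if_splits)
  have cP: "c \<in> PiE (insert e F) L" and sc: "map c (take j pe) = map c (drop j pe)"
    and dP: "d \<in> PiE (insert e F) L" and sd: "map d (take j pe) = map d (drop j pe)"
    using c d by (simp_all add: repetitive_def extensions_def pe_def)
  show "c = d"
  proof
    fix x
    consider "x \<notin> insert e F" | "x \<in> insert e F - H" | "x \<in> H" by blast
    thus "c x = d x"
    proof cases
      case 1
      thus ?thesis using PiE_arb[OF cP] PiE_arb[OF dP] by simp
    next
      case 2
      thus ?thesis by (rule off)
    next
      case 3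
      \<comment> \<open>a repetition copies the colour of x from its partner in the second half, which lies off H\<close>
      then obtain t where t: "t < j" "x = pe ! t" using l' by (auto simp: H_def in_set_conv_nth)
      have "pe ! (j + t) \<in> set pe" using t l' by simp
      hence "pe ! (j + t) \<in> insert e F - H"
        using spe nth_second_half_notin_first_half[OF dist l' t(1)] by (auto simp: H_def)
      thus ?thesis using repetition_nth[OF l' sc t(1)] repetition_nth[OF l' sd t(1)] off t(2) by simp
    qed
  qed
qed

lemma card_repetitive_first_half_le:
  assumes F: "F \<subseteq> E" and e: "e \<in> E" "e \<notin> F" and IH: "\<And>F'. F' \<subset> F \<Longrightarrow> grows F'"
    and p: "is_path (insert e F) vs" and l: "length (path_edges vs) = 2 * j"
    and et: "e \<in> set (take j (path_edges vs))"
  shows "real (card (repetitive F e j vs)) * \<beta> ^ (j - 1) \<le> card (colourings F)"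
proof -
  define S where "S = set (take j (path_edges vs)) - {e}"
  have dist: "distinct (path_edges vs)" and spe: "set (path_edges vs) \<subseteq> insert e F"
    using p distinct_path_edges by (auto simp: is_path_iff_edges)
  have card_S: "card S = j - 1"
    using et distinct_card[OF distinct_take[OF dist, of j]] l by (simp add: S_def)
  have S: "S \<subseteq> F" using spe by (auto simp: S_def dest: in_set_takeD)
  have "(\<lambda>c. restrict c (F - S)) ` repetitive F e j vs \<subseteq> colourings (F - S)"
  proof clarify
    fix c assume "c \<in> repetitive F e j vs"
    hence "c \<in> PiE (insert e F) L" "nonrepetitive (F - S) c"
      by (auto simp: repetitive_def extensions_def intro: nonrepetitive_antimono)
    thus "restrict c (F - S) \<in> colourings (F - S)"
      by (auto simp: colourings_def intro: nonrepetitive_cong[of "F - S" c])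
  qed
  hence "card (repetitive F e j vs) \<le> card (colourings (F - S))"
    using restrict_inj_on_repetitive[OF e(2) p l et] finite_colourings[of "F - S"] F
    by (intro card_inj_on_le) (auto simp: S_def)
  hence "real (card (repetitive F e j vs)) * \<beta> ^ (j - 1) \<le> card (colourings (F - S)) * \<beta> ^ card S"
    using beta_pos card_S by (simp add: mult_right_mono)
  also have "\<dots> \<le> card (colourings F)" by (rule card_colourings_diff_le[OF F IH S])
  finally show ?thesis .
qed

lemma repetitive_rev:
  "length (path_edges vs) = 2 * j \<Longrightarrow> repetitive F e j (rev vs) = repetitive F e j vs"
  unfolding repetitive_def path_edges_rev
  by (metis (no_types, opaque_lifting) length_rev repetition_rev rev_rev_ident)

lemma card_repetitive_le:
  assumes F: "F \<subseteq> E" and e: "e \<in> E" "e \<notin> F" and IH: "\<And>F'. F' \<subset> F \<Longrightarrow> grows F'"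
    and uv: "e = {u, v}" and vs: "vs \<in> paths_through (insert e F) u v (2 * j + 1)"
  shows "real (card (repetitive F e j vs)) \<le> card (colourings F) / \<beta> ^ (j - 1)"
proof -
  obtain i where p: "is_path (insert e F) vs" and l: "length vs = 2 * j + 1"
    and i: "Suc i < 2 * j + 1" "vs ! i = u" "vs ! Suc i = v"
    using vs unfolding paths_through_def by blast
  have l': "length (path_edges vs) = 2 * j" using l by simp
  have "real (card (repetitive F e j vs)) * \<beta> ^ (j - 1) \<le> card (colourings F)"
  proof (cases "e \<in> set (take j (path_edges vs))")
    case True
    show ?thesis using card_repetitive_first_half_le[OF F e IH p l' True] .
  next
    case False
    have "e \<in> set (path_edges vs)"
      using uv i l by (auto simp: in_set_conv_nth nth_path_edges intro!: exI[of _ i])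
    hence "e \<in> set (take j (path_edges (rev vs)))"
      using False l' by (simp add: path_edges_rev take_rev) (metis Un_iff append_take_drop_id set_append)
    with p l' show ?thesis
      using card_repetitive_first_half_le[OF F e IH, of "rev vs" j] repetitive_rev[OF l']
      by (simp add: is_path_rev path_edges_rev)
  qed
  thus ?thesis using beta_pos by (simp add: pos_le_divide_eq)
qed

lemma bad_extension_repetitive:
  assumes F: "F \<subseteq> E" and e: "e \<in> E" and uv: "e = {u, v}"
    and c: "c \<in> extensions F e - colourings (insert e F)"
  shows "\<exists>j \<in> {1..card E}. \<exists>vs \<in> paths_through (insert e F) u v (2 * j + 1).
           c \<in> repetitive F e j vs"
proof -
  have cF: "nonrepetitive F c" and "\<not> nonrepetitive (insert e F) c"
    using c by (auto simp: extensions_def colourings_def)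
  then obtain vs j where p: "is_path (insert e F) vs" and j: "1 \<le> j"
    and l: "length (path_edges vs) = 2 * j"
    and sq: "map c (take j (path_edges vs)) = map c (drop j (path_edges vs))"
    unfolding nonrepetitive_def by blast
  have c_rep: "c \<in> repetitive F e j vs" using c sq by (simp add: repetitive_def)
  have "e \<in> set (path_edges vs)"
  proof (rule ccontr)
    assume "e \<notin> set (path_edges vs)"
    hence "is_path F vs" using p by (auto simp: is_path_iff_edges)
    thus False using cF j l sq unfolding nonrepetitive_def by blast
  qed
  then obtain i where i: "Suc i < length vs" "{vs ! i, vs ! Suc i} = {u, v}"
    using uv by (auto simp: in_set_conv_nth nth_path_edges less_diff_conv)
  have lv: "length vs = 2 * j + 1" using l j by simp
  have "2 * j \<le> card E"
    using l distinct_card[OF distinct_path_edges] p F e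
    by (metis card_mono finite_E insert_subset is_path_iff_edges order.trans)
  hence jE: "j \<in> {1..card E}" using j by simp
  show ?thesis
  proof (cases "vs ! i = u")
    case True
    hence "vs \<in> paths_through (insert e F) u v (2 * j + 1)"
      using p lv i by (auto simp: paths_through_def doubleton_eq_iff)
    thus ?thesis using jE c_rep by blast
  next
    case False
    hence "vs \<in> paths_through (insert e F) v u (2 * j + 1)"
      using p lv i by (auto simp: paths_through_def doubleton_eq_iff)
    thus ?thesis using jE c_rep repetitive_rev[OF l] paths_through_rev by metis
  qed
qed

lemma card_bad_extensions_le:
  assumes F: "F \<subseteq> E" and e: "e \<in> E" "e \<notin> F" and IH: "\<And>F'. F' \<subset> F \<Longrightarrow> grows F'"
  shows "real (card (extensions F e - colourings (insert e F)))
           \<le> card (colourings F) * (2 * D / (1 - D ^ 2 / \<beta>) ^ 2)"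
proof -
  obtain u v where uv: "e = {u, v}"
    using simple e(1) by (auto simp: simple_graph_def card_2_iff)
  define G where "G = insert e F"
  define P where "P j = paths_through G u v (2 * j + 1)" for j
  define N where "N = real (card (colourings F))"
  have GE: "G \<subseteq> E" using F e by (simp add: G_def)
  have P: "finite (P j)" "card (P j) \<le> 2 * j * D ^ (2 * j - 1)" for j
    using finite_card_paths_through[OF finite_neighbours[OF GE] card_neighbours_le[OF GE], of u v "2 * j + 1"]
    by (simp_all add: P_def)
  have rep: "real (card (repetitive F e j vs)) \<le> N / \<beta> ^ (j - 1)" if "vs \<in> P j" for j vs
    using card_repetitive_le[OF F e IH uv] that by (simp add: P_def G_def N_def)
  have fin_rep: "finite (repetitive F e j vs)" for j vs
    using finite_extensions[OF F e(1)] by (simp add: repetitive_def)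
  have "card (extensions F e - colourings G) \<le> card (\<Union>j\<in>{1..card E}. \<Union>vs\<in>P j. repetitive F e j vs)"
    using bad_extension_repetitive[OF F e(1) uv] P(1) fin_rep
    by (intro card_mono) (auto simp: G_def P_def)
  also have "\<dots> \<le> (\<Sum>j = 1..card E. card (\<Union>vs\<in>P j. repetitive F e j vs))"
    by (rule card_UN_le) simp
  also have "\<dots> \<le> (\<Sum>j = 1..card E. \<Sum>vs\<in>P j. card (repetitive F e j vs))"
    using P(1) by (intro sum_mono card_UN_le)
  finally have "real (card (extensions F e - colourings G))
      \<le> (\<Sum>j = 1..card E. \<Sum>vs\<in>P j. real (card (repetitive F e j vs)))"
    by (simp flip: of_nat_sum)
  also have "\<dots> \<le> (\<Sum>j = 1..card E. real (card (P j)) * (N / \<beta> ^ (j - 1)))"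
  proof (rule sum_mono)
    fix j show "(\<Sum>vs\<in>P j. real (card (repetitive F e j vs))) \<le> real (card (P j)) * (N / \<beta> ^ (j - 1))"
      using rep sum_bounded_above[of "P j" "\<lambda>vs. real (card (repetitive F e j vs))"] by blast
  qed
  also have "\<dots> \<le> (\<Sum>j = 1..card E. real (2 * j * D ^ (2 * j - 1)) * (N / \<beta> ^ (j - 1)))"
  proof (intro sum_mono mult_right_mono)
    fix j show "real (card (P j)) \<le> real (2 * j * D ^ (2 * j - 1))" using P(2) by (simp only: of_nat_le_iff)
  qed (use beta_pos in \<open>simp add: N_def\<close>)
  also have "\<dots> \<le> N * (2 * D / (1 - D ^ 2 / \<beta>) ^ 2)"
    using beta_gt by (rule sum_path_weights_le) (simp add: N_def)
  finally show ?thesis by (simp add: G_def N_def)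
qed

lemma grows_if_proper_subsets_grow:
  assumes F: "F \<subseteq> E" and IH: "\<And>F'. F' \<subset> F \<Longrightarrow> grows F'"
  shows "grows F"
  unfolding grows_def
proof
  fix e assume e: "e \<in> E - F"
  let ?N = "real (card (colourings F))"
  have "colourings (insert e F) \<subseteq> extensions F e"
    by (auto simp: colourings_def extensions_def intro: nonrepetitive_antimono)
  moreover have "finite (extensions F e)" using finite_extensions F e by blast
  ultimately have "real (card (colourings (insert e F)))
      = card (extensions F e) - real (card (extensions F e - colourings (insert e F)))"
    by (simp add: card_Diff_subset card_mono finite_subset of_nat_diff)
  moreover have "k * ?N \<le> card (extensions F e)"
    using card_extensions_ge[OF F] e by (metis DiffE of_nat_le_iff of_nat_mult)
  moreover have "(\<beta> + 2 * D / (1 - D ^ 2 / \<beta>) ^ 2) * ?N \<le> k * ?N"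
    using k_ge by (simp add: mult_right_mono)
  ultimately show "\<beta> * card (colourings F) \<le> card (colourings (insert e F))"
    using card_bad_extensions_le[OF F _ _ IH, of e] e by (simp add: algebra_simps)
qed

lemma grows:
  assumes "F \<subseteq> E"
  shows "grows F"
  using finite_subset[OF assms finite_E] assms
proof (induction F rule: finite_psubset_induct)
  case (psubset F)
  show ?case
  proof (rule grows_if_proper_subsets_grow)
    show "F \<subseteq> E" by fact
    show "grows F'" if "F' \<subset> F" for F'
      using psubset.IH[OF that] that psubset.prems by (meson order.trans psubset_imp_subset)
  qed
qed

lemma colourings_nonempty: "colourings E \<noteq> {}"
proof -
  have "colourings {} = {\<lambda>_. undefined}" by (auto simp: colourings_def nonrepetitive_empty)
  hence "\<beta> ^ card E \<le> card (colourings E)"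
    using card_colourings_diff_le[of E E] grows[of "_ :: 'a set set"] by simp
  moreover have "0 < \<beta> ^ card E" using beta_pos by simp
  ultimately show ?thesis by auto
qed

end

theorem thue_choosable_if_large_lists:
  assumes "simple_graph V E" and "\<And>v. v \<in> V \<Longrightarrow> degree E v \<le> D"
    and "real D ^ 2 < \<beta>" and "\<beta> + 2 * real D / (1 - real D ^ 2 / \<beta>) ^ 2 \<le> real k"
  shows "thue_choosable E k"
  unfolding thue_choosable_def
proof (intro allI impI)
  fix L :: "'a set \<Rightarrow> nat set" assume L: "\<forall>e\<in>E. infinite (L e) \<or> k \<le> card (L e)"
  \<comment> \<open>shrink every list to exactly k colours, so that the counting runs over finite sets\<close>
  have "\<exists>T. T \<subseteq> L e \<and> finite T \<and> card T = k" if "e \<in> E" for e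
  proof (cases "finite (L e)")
    case True
    thus ?thesis using L that obtain_subset_with_card_n[of k "L e"] by (metis finite_subset)
  qed (use infinite_arbitrarily_large in blast)
  then obtain L' where L': "\<And>e. e \<in> E \<Longrightarrow> L' e \<subseteq> L e \<and> finite (L' e) \<and> card (L' e) = k"
    using bchoice[of E "\<lambda>e T. T \<subseteq> L e \<and> finite T \<and> card T = k"] by blast
  interpret nonrep_counting V E L' D k \<beta>
    using assms L' by unfold_locales auto
  obtain c where c: "c \<in> colourings E" using colourings_nonempty by blast
  hence "\<forall>e\<in>E. c e \<in> L e" using L' by (fastforce simp: colourings_def PiE_iff)
  thus "\<exists>c. (\<forall>e\<in>E. c e \<in> L e) \<and> nonrepetitive E c"
    using c by (auto simp: colourings_def)
qed

lemma choosability_bound_at: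
  fixes t :: real
  assumes t: "0 < t"
  defines "\<beta> \<equiv> t ^ 6 + 3 / 2 * t ^ 5"
  shows "t ^ 6 < \<beta>"
    and "\<beta> + 2 * t ^ 3 / (1 - t ^ 6 / \<beta>) ^ 2 = t ^ 6 + 43 / 18 * t ^ 5 + 8 / 3 * t ^ 4 + 2 * t ^ 3"
proof -
  show "t ^ 6 < \<beta>" using t by (simp add: \<beta>_def)
  have \<beta>: "\<beta> = t ^ 5 * (2 * t + 3) / 2" and t6: "t ^ 6 = t ^ 5 * t"
    by (simp_all add: \<beta>_def algebra_simps eval_nat_numeral)
  have "t ^ 6 / \<beta> = 2 * t / (2 * t + 3)" unfolding \<beta> t6
    using t by (simp add: divide_simps add_pos_pos)
  hence "1 - t ^ 6 / \<beta> = 3 / (2 * t + 3)" using t by (simp add: field_simps)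
  hence h: "2 * t ^ 3 / (1 - t ^ 6 / \<beta>) ^ 2 = 2 * t ^ 3 * (2 * t + 3) ^ 2 / 9"
    by (simp add: power_divide)
  show "\<beta> + 2 * t ^ 3 / (1 - t ^ 6 / \<beta>) ^ 2 = t ^ 6 + 43 / 18 * t ^ 5 + 8 / 3 * t ^ 4 + 2 * t ^ 3"
    unfolding h unfolding \<beta>_def by (simp add: field_simps power2_eq_square eval_nat_numeral)
qed

lemma cube_root_power: "0 < x \<Longrightarrow> (x powr (1 / 3)) ^ n = x powr (n / 3)"
  for x :: real
  by (simp add: powr_power)

lemma thue_choosable_cube_root_bound:
  assumes "simple_graph V E" and "\<And>v. v \<in> V \<Longrightarrow> degree E v \<le> d" and "1 \<le> d"
  defines "t \<equiv> real d powr (1 / 3)"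
  shows "thue_choosable E (nat \<lceil>t ^ 6 + 43 / 18 * t ^ 5 + 8 / 3 * t ^ 4 + 2 * t ^ 3\<rceil>)"
proof -
  have t: "0 < t" using assms(3) by (simp add: t_def)
  define \<beta> where "\<beta> = t ^ 6 + 3 / 2 * t ^ 5"
  have d: "real d ^ 2 = t ^ 6" "real d = t ^ 3"
    using assms(3) by (simp_all add: t_def cube_root_power powr_realpow)
  show ?thesis
  proof (rule thue_choosable_if_large_lists[OF assms(1,2)])
    show "real d ^ 2 < \<beta>" using choosability_bound_at(1)[OF t] by (simp add: d \<beta>_def)
    show "\<beta> + 2 * real d / (1 - real d ^ 2 / \<beta>) ^ 2
        \<le> real (nat \<lceil>t ^ 6 + 43 / 18 * t ^ 5 + 8 / 3 * t ^ 4 + 2 * t ^ 3\<rceil>)"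
      unfolding d(1) unfolding d(2) \<beta>_def choosability_bound_at(2)[OF t] by (rule real_nat_ceiling_ge)
  qed
qed

lemma two_powr_four_thirds_ge: "43 / 18 \<le> (2 :: real) powr (4 / 3)"
proof (rule ccontr)
  assume "\<not> ?thesis"
  hence "(2 powr (4 / 3)) ^ 3 < (43 / 18 :: real) ^ 3"
    by (intro power_strict_mono) auto
  moreover have "(2 powr (4 / 3)) ^ 3 = (16 :: real)" by (simp add: powr_power)
  ultimately show False by (simp add: power3_eq_cube)
qed

lemma cube_root_polynomial_le:
  fixes t :: real
  assumes t: "1 \<le> t"
  shows "t ^ 6 + 43 / 18 * t ^ 5 + 8 / 3 * t ^ 4 + 2 * t ^ 3 + 1 \<le> t ^ 6 + 2 powr (4 / 3) * t ^ 5 + 6 * t ^ 4"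
proof -
  have "t ^ 3 \<le> t ^ 4" "1 \<le> t ^ 4" using t by (simp_all add: power_increasing)
  moreover have "43 / 18 * t ^ 5 \<le> 2 powr (4 / 3) * t ^ 5"
    using two_powr_four_thirds_ge t by (simp add: mult_right_mono)
  ultimately show ?thesis by linarith
qed

lemma thue_choice_index_le:
  assumes G: "simple_graph V E" and deg: "\<And>v. v \<in> V \<Longrightarrow> degree E v \<le> d" and d: "1 \<le> d"
  shows "real (thue_choice_index E)
    \<le> real d ^ 2 + 2 powr (4 / 3) * real d powr (5 / 3) + 6 * real d powr (4 / 3)"
proof -
  define t where "t = real d powr (1 / 3)"
  let ?P = "t ^ 6 + 43 / 18 * t ^ 5 + 8 / 3 * t ^ 4 + 2 * t ^ 3"
  have t: "1 \<le> t" using d by (simp add: t_def ge_one_powr_ge_zero)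
  have "thue_choice_index E \<le> nat \<lceil>?P\<rceil>"
    unfolding thue_choice_index_def t_def by (rule Least_le, rule thue_choosable_cube_root_bound[OF G deg d])
  hence "real (thue_choice_index E) \<le> real (nat \<lceil>?P\<rceil>)" by simp
  also have "\<dots> = of_int \<lceil>?P\<rceil>"
  proof (intro of_nat_nat)
    have "0 < ?P" using t by (simp add: add_pos_pos)
    thus "0 \<le> \<lceil>?P\<rceil>" by simp
  qed
  also have "\<dots> \<le> ?P + 1" by (rule of_int_ceiling_le_add_one)
  also have "\<dots> \<le> t ^ 6 + 2 powr (4 / 3) * t ^ 5 + 6 * t ^ 4" by (rule cube_root_polynomial_le[OF t])
  also have "\<dots> = real d ^ 2 + 2 powr (4 / 3) * real d powr (5 / 3) + 6 * real d powr (4 / 3)"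
    using d by (simp add: t_def cube_root_power powr_realpow)
  finally show ?thesis .
qed

lemma degree_le_max_degree: "finite V \<Longrightarrow> v \<in> V \<Longrightarrow> degree E v \<le> max_degree V E"
  by (simp add: max_degree_def)

theorem theorem6:
  shows "\<exists>f :: nat \<Rightarrow> real. f \<in> O[at_top](\<lambda>d. real d powr (4/3)) \<and>
    (\<forall>(V :: nat set) (E :: nat set set). simple_graph V E \<longrightarrow> max_degree V E \<ge> 3 \<longrightarrow>
       real (thue_choice_index E) \<le> real (max_degree V E) ^ 2
         + 2 powr (4/3) * real (max_degree V E) powr (5/3) + f (max_degree V E))"
proof (intro exI conjI allI impI)
  show "(\<lambda>d. 6 * real d powr (4 / 3)) \<in> O[at_top](\<lambda>d. real d powr (4 / 3))" by simp
next
  fix V :: "nat set" and E :: "nat set set"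
  assume G: "simple_graph V E" and "3 \<le> max_degree V E"
  moreover have "\<And>v. v \<in> V \<Longrightarrow> degree E v \<le> max_degree V E"
    using G by (simp add: degree_le_max_degree simple_graph_def)
  ultimately show "real (thue_choice_index E) \<le> real (max_degree V E) ^ 2
      + 2 powr (4 / 3) * real (max_degree V E) powr (5 / 3) + 6 * real (max_degree V E) powr (4 / 3)"
    by (intro thue_choice_index_le) auto
qed

end
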